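(* Let $K\subseteq\mathbb{R}$ be a cubic number field having exactly one real embedding, and let $\alpha,\beta\in K$. Then there exists a strictly increasing sequence $(\psi_n)_{n\ge1}$ of positive integers such that $\lim_{n\to\infty}\psi_n\|\psi_n\alpha\|\,\|\psi_n\beta\|=0$.
   Context: For $x\in\mathbb{R}$, $\|x\|$ denotes the distance from $x$ to the nearest integer. *)

theory Defs
  imports "HOL-Analysis.Analysis" "HOL-Computational_Algebra.Computational_Algebra"
begin

definition dist_nint :: "real \<Rightarrow> real" where
  "dist_nint x = \<bar>x - of_int (round x)\<bar>"

text \<open>The field Q(theta) inside R, for theta algebraic: all rational polynomial
  expressions in theta.\<close>
definition Q_adjoin :: "real \<Rightarrow> real set" where
  "Q_adjoin \<theta> = {poly (map_poly of_rat p) \<theta> | p :: rat poly. True}"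

text \<open>K = Q(theta) is a cubic number field with exactly one real embedding:
  theta is a root of an irreducible rational cubic f having exactly one real root
  (real embeddings of K correspond to the real roots of f).\<close>
definition cubic_one_real_embedding_gen :: "rat poly \<Rightarrow> real \<Rightarrow> bool" where
  "cubic_one_real_embedding_gen f \<theta> \<longleftrightarrow>
     irreducible f \<and> degree f = 3 \<and> poly (map_poly of_rat f) \<theta> = 0 \<and>
     card {x :: real. poly (map_poly of_rat f) x = 0} = 1"

end

theory Submission
  imports Defs "HOL-Computational_Algebra.Field_as_Ring" "HOL-Library.Quadratic_Discriminant"
begin

(*
  Scaling theta by a suitable integer D turns it into a root eta of a monic integral cubic
  X^3 - e1 X^2 + e2 X - e3, whose other roots sigma, cnj sigma are not real; every element of
  Q(theta) becomes an element of Z[eta] after multiplication by some integer M > 0.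

  Dirichlet's box principle gives infinitely many elements of Z[eta] with positive real embedding
  and bounded norm.  Two of them, w1 and w2, with the same norm N and congruent modulo a multiple
  of N, have an integral quotient: a unit whose real embedding eps is > 1 and whose complex
  embedding omega satisfies eps * |omega|^2 = 1.  The argument of omega is an irrational multiple
  of 2 pi, since otherwise a power of the unit would be rational.

  For q = M * Tr(eps^n) and gamma with M * gamma = g(eta), the integer Tr(eps^n g) differs from
  q * gamma by 2 Re(omega^n (g(eta) - g(sigma))).  Hence q ||q alpha|| ||q beta|| is at most a
  constant times eps^n |omega|^(2n) |Re(cis(n arg omega) W)| = |Re(cis(n arg omega) W)|, and by
  the density of n * arg omega modulo 2 pi this is arbitrarily small for arbitrarily large n.
*)

section \<open>Estimates for real and complex numbers\<close>

lemma dist_nint_le: "dist_nint t \<le> \<bar>t - of_int k\<bar>"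
proof (cases "k = round t")
  case False
  then have "1 \<le> \<bar>of_int k - of_int (round t) :: real\<bar>"
    by (metis of_int_1_le_iff of_int_abs of_int_diff int_one_le_iff_zero_less
        right_minus_eq zero_less_abs_iff)
  moreover have "\<bar>of_int (round t) - t\<bar> \<le> 1/2"
    by (rule of_int_round_abs_le)
  ultimately show ?thesis
    unfolding dist_nint_def by linarith
qed (simp add: dist_nint_def)

lemma irrational_rotation_Re_small:
  fixes \<phi> \<delta> :: real and W :: complex
  assumes irrational: "\<phi> / (2 * pi) \<notin> \<rat>" and "\<delta> > 0"
  shows "\<exists>n \<ge> N. \<bar>Re (cis (real n * \<phi>) * W)\<bar> < \<delta>"
proof (cases "W = 0")
  case False
  define r where "r = cmod W"
  have "r > 0"
    using False by (simp add: r_def)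
  \<comment> \<open>Kronecker: some n \<ge> N makes n \<phi> + Arg W close to pi/2 modulo 2 pi.\<close>
  define x where "x = (pi/2 - Arg W) / (2 * pi) - real N * (\<phi> / (2 * pi))"
  obtain h k where "k > 0" and hk: "\<bar>of_int k * (\<phi> / (2 * pi)) - of_int h - x\<bar> < \<delta> / (2 * pi * r)"
    using sequence_of_fractional_parts_is_dense[OF irrational] \<open>\<delta> > 0\<close> \<open>r > 0\<close>
    by (metis divide_pos_pos mult_pos_pos pi_gt_zero zero_less_numeral)
  define n where "n = N + nat k"
  define d where "d = real n * \<phi> + Arg W - pi/2 - 2 * pi * of_int h"
  define X where "X = of_int k * (\<phi> / (2 * pi)) - of_int h - x"
  have "d = 2 * pi * X"
    using \<open>k > 0\<close> by (simp add: d_def n_def x_def X_def field_simps)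
  moreover have "2 * pi * \<bar>X\<bar> < 2 * pi * (\<delta> / (2 * pi * r))"
    using hk unfolding X_def by (intro mult_strict_left_mono) auto
  ultimately have "\<bar>d\<bar> < \<delta> / r"
    by (simp add: abs_mult)
  have "Re (cis (real n * \<phi>) * W) = r * cos (real n * \<phi> + Arg W)"
    by (subst rcis_cmod_Arg[symmetric]) (simp add: r_def rcis_def cos_add algebra_simps)
  also have "cos (real n * \<phi> + Arg W) = - sin d"
    by (simp add: d_def cos_add sin_add sin_diff cos_diff)
  finally have "\<bar>Re (cis (real n * \<phi>) * W)\<bar> \<le> r * \<bar>d\<bar>"
    using \<open>r > 0\<close> abs_sin_x_le_abs_x[of d] by (simp add: abs_mult)
  also have "\<dots> < \<delta>"
    using \<open>\<bar>d\<bar> < \<delta> / r\<close> \<open>r > 0\<close> by (simp add: field_simps)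
  finally show ?thesis
    unfolding n_def by (intro exI[of _ "N + nat k"]) simp
qed (use \<open>\<delta> > 0\<close> in auto)

lemma frequently_small_imp_subseq_tendsto_0:
  fixes g :: "nat \<Rightarrow> real"
  assumes nonneg: "\<And>m. g m \<ge> 0" and small: "\<And>d B. d > 0 \<Longrightarrow> \<exists>m > B. g m < d"
  shows "\<exists>\<psi>. strict_mono \<psi> \<and> (\<forall>n. \<psi> n > 0) \<and> (\<lambda>n. g (\<psi> n)) \<longlonglongrightarrow> 0"
proof -
  obtain F where F: "\<And>d B. d > 0 \<Longrightarrow> F d B > B \<and> g (F d B) < d"
    using small by metis
  define \<psi> where "\<psi> = rec_nat (F 1 0) (\<lambda>k p. F (1 / (real k + 2)) p)"
  have \<psi>_0: "\<psi> 0 = F 1 0" and \<psi>_Suc: "\<psi> (Suc k) = F (1 / (real k + 2)) (\<psi> k)" for k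
    by (simp_all add: \<psi>_def)
  have bound: "g (\<psi> k) < 1 / (real k + 1)" and pos: "\<psi> k > 0" for k
    using F[of 1 0] F[of "1 / (real k + 1)" "\<psi> (k - 1)"]
    by (cases k; simp add: \<psi>_0 \<psi>_Suc add.commute)+
  have "strict_mono \<psi>"
    by (rule strict_monoI_Suc) (use F in \<open>simp add: \<psi>_Suc\<close>)
  moreover have "(\<lambda>n. g (\<psi> n)) \<longlonglongrightarrow> 0"
  proof (rule tendsto_sandwich[of "\<lambda>_. 0" _ _ "\<lambda>n. 1 / (real n + 1)"])
    show "(\<lambda>n. 1 / (real n + 1)) \<longlonglongrightarrow> 0"
      using LIMSEQ_inverse_real_of_nat by (simp add: inverse_eq_divide add.commute)
    show "\<forall>\<^sub>F n in sequentially. g (\<psi> n) \<le> 1 / (real n + 1)"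
      using bound by (simp add: less_imp_le)
  qed (use nonneg in auto)
  ultimately show ?thesis
    using pos by blast
qed

lemma power_eq_cmod_power_cis: "w ^ n = complex_of_real (cmod w ^ n) * cis (real n * Arg w)"
proof -
  have "w ^ n = rcis (cmod w) (Arg w) ^ n"
    by (simp add: rcis_cmod_Arg)
  also have "\<dots> = rcis (cmod w ^ n) (real n * Arg w)"
    by (rule DeMoivre2)
  finally show ?thesis
    by (simp add: rcis_def)
qed

lemma floor_divide_eq_imp_abs_diff_less:
  fixes x y c \<delta> :: real
  assumes "\<delta> > 0" and "\<lfloor>(x + c) / \<delta>\<rfloor> = \<lfloor>(y + c) / \<delta>\<rfloor>"
  shows "\<bar>x - y\<bar> < \<delta>"
proof -
  define X Y where "X = (x + c) / \<delta>" and "Y = (y + c) / \<delta>"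
  have "X - 1 < of_int \<lfloor>X\<rfloor>" "of_int \<lfloor>X\<rfloor> \<le> X" "Y - 1 < of_int \<lfloor>Y\<rfloor>" "of_int \<lfloor>Y\<rfloor> \<le> Y"
    by simp_all
  then have "\<bar>X - Y\<bar> < 1"
    using assms(2) unfolding X_def Y_def by linarith
  moreover have "x - y = (X - Y) * \<delta>"
    using assms(1) unfolding X_def Y_def by (simp add: field_simps)
  ultimately show ?thesis
    using assms(1) by (simp add: abs_mult)
qed

lemma floor_divide_mem_range:
  fixes x R :: real and K :: nat
  assumes "\<bar>x\<bar> \<le> R" and "R > 0" and "K > 0"
  shows "\<lfloor>(x + R) / (2 * R / K)\<rfloor> \<in> {0..int K}"
proof -
  have "(x + R) / (2 * R / K) \<le> 2 * R / (2 * R / K)"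
    using assms by (intro divide_right_mono) auto
  also have "\<dots> = real K"
    using assms(2,3) by simp
  finally have "\<lfloor>(x + R) / (2 * R / K)\<rfloor> \<le> int K"
    using floor_mono by fastforce
  moreover have "0 \<le> \<lfloor>(x + R) / (2 * R / K)\<rfloor>"
    using assms by simp
  ultimately show ?thesis
    by simp
qed

lemma pigeonhole_close_pair:
  fixes f :: "'b \<Rightarrow> complex" and R :: real and K :: nat
  assumes "finite A" and "R > 0" and "K > 0" and bounded: "\<And>v. v \<in> A \<Longrightarrow> cmod (f v) \<le> R"
    and card: "(K + 1)^2 < card A"
  obtains v w where "v \<in> A" and "w \<in> A" and "v \<noteq> w" and "cmod (f v - f w) < 4 * R / K"
proof -
  define \<delta> where "\<delta> = 2 * R / K"
  have "\<delta> > 0"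
    using assms(2,3) by (simp add: \<delta>_def)
  define box where "box v = (\<lfloor>(Re (f v) + R) / \<delta>\<rfloor>, \<lfloor>(Im (f v) + R) / \<delta>\<rfloor>)" for v
  have "box v \<in> {0..int K} \<times> {0..int K}" if "v \<in> A" for v
  proof -
    have "\<bar>Re (f v)\<bar> \<le> R" "\<bar>Im (f v)\<bar> \<le> R"
      using bounded[OF that] abs_Re_le_cmod abs_Im_le_cmod order_trans by blast+
    then show ?thesis
      using floor_divide_mem_range assms(2,3) by (simp add: box_def \<delta>_def)
  qed
  then have "card (box ` A) \<le> card ({0..int K} \<times> {0..int K})"
    by (intro card_mono) blast+
  also have "\<dots> = (K + 1)^2"
    by (simp add: card_cartesian_product power2_eq_square nat_add_distrib)
  finally have "\<not> inj_on box A"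
    using card card_image by fastforce
  then obtain v w where "v \<in> A" "w \<in> A" "v \<noteq> w" and same: "box v = box w"
    by (meson inj_onI)
  have "\<bar>Re (f v) - Re (f w)\<bar> < \<delta>" and "\<bar>Im (f v) - Im (f w)\<bar> < \<delta>"
    using same floor_divide_eq_imp_abs_diff_less[OF \<open>\<delta> > 0\<close>] by (auto simp: box_def)
  then have "cmod (f v - f w) < 2 * \<delta>"
    using cmod_le[of "f v - f w"] by simp
  also have "2 * \<delta> = 4 * R / K"
    by (simp add: \<delta>_def)
  finally show ?thesis
    using that \<open>v \<in> A\<close> \<open>w \<in> A\<close> \<open>v \<noteq> w\<close> by blast
qed

section \<open>Rational polynomials and the field Q(theta)\<close>

lemma map_poly_of_rat_add:
  "map_poly (of_rat :: rat \<Rightarrow> 'a::field_char_0) (p + q) = map_poly of_rat p + map_poly of_rat q"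
  by (intro poly_eqI) (simp add: coeff_map_poly of_rat_add)

lemma map_poly_of_rat_mult:
  "map_poly (of_rat :: rat \<Rightarrow> 'a::field_char_0) (p * q) = map_poly of_rat p * map_poly of_rat q"
  by (intro poly_eqI) (simp add: coeff_map_poly coeff_mult of_rat_sum of_rat_mult)

lemma irreducible_common_root_degree_le:
  fixes f p :: "rat poly" and z :: "'a::field_char_0"
  assumes "irreducible f" and "poly (map_poly of_rat f) z = 0"
    and "poly (map_poly of_rat p) z = 0" and "p \<noteq> 0"
  shows "degree f \<le> degree p"
proof -
  define g where "g = gcd f p"
  have "fst (bezout_coefficients f p) * f + snd (bezout_coefficients f p) * p = g"
    unfolding g_def by (rule bezout_coefficients_fst_snd)
  then have "poly (map_poly of_rat g) z = 0"
    using assms(2,3) by (metis map_poly_of_rat_add map_poly_of_rat_mult poly_add poly_mult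
        mult_zero_right add_0)
  then have "\<not> is_unit g"
    by (auto elim!: is_unit_polyE' simp: monom_0 map_poly_pCons)
  moreover obtain h where "f = g * h"
    unfolding g_def by (metis dvdE gcd_dvd1)
  ultimately have "is_unit h"
    using assms(1) by (meson irreducibleD)
  then have "f dvd g"
    using \<open>f = g * h\<close> by (metis dvd_mult_unit_iff dvd_refl)
  then have "f dvd p"
    unfolding g_def using dvd_trans gcd_dvd2 by blast
  then show ?thesis
    using assms(4) by (simp add: dvd_imp_degree_le)
qed

lemma poly_of_rat_degree_le_3:
  fixes p :: "rat poly" and z :: "'a::field_char_0"
  assumes "degree p \<le> 3"
  shows "poly (map_poly of_rat p) z = of_rat (coeff p 0) + of_rat (coeff p 1) * z
           + of_rat (coeff p 2) * z^2 + of_rat (coeff p 3) * z^3"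
proof -
  have "poly (map_poly of_rat p) z = (\<Sum>i\<le>degree p. of_rat (coeff p i) * z^i)"
    by (simp add: poly_altdef degree_map_poly coeff_map_poly)
  also have "\<dots> = (\<Sum>i\<le>3. of_rat (coeff p i) * z^i)"
    by (rule sum.mono_neutral_left) (use assms in \<open>auto simp: coeff_eq_0\<close>)
  finally show ?thesis
    by (simp add: numeral_3_eq_3 numeral_2_eq_2 atMost_Suc algebra_simps)
qed

lemma irreducible_cubic_root_rat_independent:
  fixes f :: "rat poly" and z :: "'a::field_char_0"
  assumes "irreducible f" and "degree f = 3" and "poly (map_poly of_rat f) z = 0"
    and "of_rat r0 + of_rat r1 * z + of_rat r2 * z^2 = 0"
  shows "r0 = 0 \<and> r1 = 0 \<and> r2 = 0"
proof -
  have root: "poly (map_poly of_rat [:r0, r1, r2:]) z = 0"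
    using assms(4) by (simp add: map_poly_pCons algebra_simps power2_eq_square)
  have "degree [:r0, r1, r2:] < degree f"
    using degree_pCons_le[of r0 "[:r1, r2:]"] degree_pCons_le[of r1 "[:r2:]"] assms(2) by simp
  then have "[:r0, r1, r2:] = 0"
    using irreducible_common_root_degree_le[OF assms(1,3) root] by (meson leD)
  then show ?thesis
    by simp
qed

lemma Q_adjoin_cubic_rep:
  fixes f :: "rat poly"
  assumes "degree f = 3" and "poly (map_poly of_rat f) \<theta> = 0" and "\<alpha> \<in> Q_adjoin \<theta>"
  obtains r0 r1 r2 where "\<alpha> = of_rat r0 + of_rat r1 * \<theta> + of_rat r2 * \<theta>^2"
proof -
  obtain p where p: "\<alpha> = poly (map_poly of_rat p) \<theta>"
    using assms(3) unfolding Q_adjoin_def by blast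
  define r where "r = p mod f"
  have "p = f * (p div f) + r"
    by (simp add: r_def)
  then have "\<alpha> = poly (map_poly of_rat r) \<theta>"
    using p assms(2) by (metis map_poly_of_rat_add map_poly_of_rat_mult poly_add poly_mult
        mult_zero_left add_0)
  moreover have "degree r < 3 \<or> r = 0"
    using degree_mod_less[of f p] assms(1) by (cases "f = 0") (auto simp: r_def)
  then have "degree r \<le> 3" and "coeff r 3 = 0"
    by (auto simp: coeff_eq_0)
  ultimately show ?thesis
    using poly_of_rat_degree_le_3[of r \<theta>] that[of "coeff r 0" "coeff r 1" "coeff r 2"] by simp
qed

lemma rat_common_denominator:
  fixes S :: "rat set"
  assumes "finite S"
  obtains d :: int where "d > 0" and "\<And>x. x \<in> S \<Longrightarrow> of_int d * x \<in> \<int>"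
proof -
  have "\<exists>d::int. d > 0 \<and> (\<forall>x\<in>S. of_int d * x \<in> \<int>)"
    using assms
  proof (induction S rule: finite_induct)
    case (insert x S)
    then obtain d :: int where d: "d > 0" "\<forall>y\<in>S. of_int d * y \<in> \<int>"
      by blast
    obtain p q where pq: "quotient_of x = (p, q)"
      by fastforce
    have "q > 0" and x: "x = of_int p / of_int q"
      using pq by (simp_all add: quotient_of_denom_pos quotient_of_div)
    have "of_int (d * q) * x = of_int (d * p)"
      using \<open>q > 0\<close> by (simp add: x)
    then have "of_int (d * q) * x \<in> \<int>"
      by (metis Ints_of_int)
    moreover have "of_int (d * q) * y \<in> \<int>" if "y \<in> S" for y
    proof -
      have "of_int q * (of_int d * y) \<in> \<int>"
        using d(2) that Ints_mult Ints_of_int by blast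
      then show ?thesis
        by (simp add: mult.assoc mult.left_commute)
    qed
    ultimately have "\<forall>y\<in>insert x S. of_int (d * q) * y \<in> \<int>"
      by blast
    then show ?case
      using d(1) \<open>q > 0\<close> by (intro exI[of _ "d * q"]) simp
  qed (auto intro: exI[of _ 1])
  with that show ?thesis
    by blast
qed

section \<open>Integral coordinates for Z[z], z a root of a monic cubic\<close>

type_synonym coords = "int \<times> int \<times> int"

definition emb :: "'a::comm_ring_1 \<Rightarrow> coords \<Rightarrow> 'a" where
  "emb z v = (case v of (a, b, c) \<Rightarrow> of_int a + of_int b * z + of_int c * z^2)"

definition cscale :: "int \<Rightarrow> coords \<Rightarrow> coords" where
  "cscale k v = (case v of (a, b, c) \<Rightarrow> (k * a, k * b, k * c))"

lemma emb_0 [simp]: "emb z (0, 0, 0) = 0"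
  by (simp add: emb_def)

lemma emb_1 [simp]: "emb z (1, 0, 0) = 1"
  by (simp add: emb_def)

lemma emb_add: "emb z (v + w) = emb z v + emb z w"
  by (cases v; cases w) (simp add: emb_def algebra_simps)

lemma emb_diff: "emb z (v - w) = emb z v - emb z w"
  by (cases v; cases w) (simp add: emb_def algebra_simps)

lemma emb_uminus: "emb z (- v) = - emb z v"
  by (cases v) (simp add: emb_def algebra_simps)

lemma emb_cscale: "emb z (cscale k v) = of_int k * emb z v"
  by (cases v) (simp add: emb_def cscale_def algebra_simps)

lemma emb_of_real: "emb (complex_of_real x) v = complex_of_real (emb x v)"
  by (cases v) (simp add: emb_def)

lemma emb_cnj: "emb (cnj z) v = cnj (emb z v)"
  by (cases v) (simp add: emb_def)

lemma norm_emb_le: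
  fixes z :: "'a::real_normed_field"
  assumes "\<bar>a\<bar> \<le> H" and "\<bar>b\<bar> \<le> H" and "\<bar>c\<bar> \<le> H"
  shows "norm (emb z (a, b, c)) \<le> of_int H * (1 + norm z + norm z ^ 2)"
proof -
  have "norm (emb z (a, b, c)) \<le> norm (of_int a :: 'a) + norm (of_int b * z) + norm (of_int c * z^2)"
    unfolding emb_def prod.case by (meson add_mono norm_triangle_ineq order.refl order_trans)
  also have "\<dots> = \<bar>of_int a\<bar> + \<bar>of_int b\<bar> * norm z + \<bar>of_int c\<bar> * norm z ^ 2"
    by (simp add: norm_mult norm_power)
  also have "\<dots> \<le> of_int H + of_int H * norm z + of_int H * norm z ^ 2"
    using assms by (intro add_mono mult_right_mono) auto
  finally show ?thesis
    by (simp add: algebra_simps)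
qed

lemma cube_add_1_sq_less:
  fixes s :: nat
  assumes "s \<ge> 1"
  shows "(s^3 + 1)^2 < (s^2 + 1)^3"
proof -
  have "(s^3 + 1)^2 = s^6 + 2 * s^3 + 1" and "(s^2 + 1)^3 = s^6 + 3 * s^4 + 3 * s^2 + 1"
    by algebra+
  moreover have "s^3 \<le> s^4" and "0 < s^2"
    using assms by (simp_all add: power_increasing)
  ultimately show ?thesis
    by linarith
qed

lemma exists_small_element:
  fixes \<eta> :: real and \<sigma> :: complex and s :: nat
  assumes "s \<ge> 1"
  obtains w where "w \<noteq> (0, 0, 0)"
    and "cmod (emb \<sigma> w) < 4 * (1 + cmod \<sigma> + cmod \<sigma> ^ 2) / s"
    and "\<bar>emb \<eta> w\<bar> \<le> s^2 * (1 + \<bar>\<eta>\<bar> + \<bar>\<eta>\<bar>^2)"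
proof -
  define H where "H = int (s^2)"
  define S where "S = 1 + cmod \<sigma> + cmod \<sigma> ^ 2"
  define A where "A = {0..H} \<times> {0..H} \<times> {0..H}"
  have "S > 0"
    by (simp add: S_def add_pos_nonneg)
  have "finite A" and "H * S > 0" and "s^3 > 0"
    using assms \<open>S > 0\<close> by (simp_all add: A_def H_def)
  moreover have "cmod (emb \<sigma> v) \<le> H * S" if v: "v \<in> A" for v
  proof -
    obtain a b c where "v = (a, b, c)" and "\<bar>a\<bar> \<le> H" "\<bar>b\<bar> \<le> H" "\<bar>c\<bar> \<le> H"
      using v by (cases v) (auto simp: A_def)
    then show ?thesis
      using norm_emb_le[of a H b c \<sigma>] by (simp add: S_def)
  qed
  moreover have "card {0..H} = s^2 + 1"
    by (simp add: H_def nat_add_distrib nat_power_eq)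
  then have "card A = (s^2 + 1)^3"
    by (simp only: A_def card_cartesian_product power3_eq_cube)
  then have "(s^3 + 1)^2 < card A"
    using cube_add_1_sq_less[OF assms] by (simp only:)
  ultimately obtain v w where "v \<in> A" "w \<in> A" "v \<noteq> w"
    and close: "cmod (emb \<sigma> v - emb \<sigma> w) < 4 * (H * S) / real (s^3)"
    by (rule pigeonhole_close_pair)
  obtain a b c where abc: "v - w = (a, b, c)" and "\<bar>a\<bar> \<le> H" "\<bar>b\<bar> \<le> H" "\<bar>c\<bar> \<le> H"
    using \<open>v \<in> A\<close> \<open>w \<in> A\<close> by (cases v; cases w) (auto simp: A_def)
  show ?thesis
  proof (rule that[of "v - w"])
    show "v - w \<noteq> (0, 0, 0)"
      using \<open>v \<noteq> w\<close> by (cases v; cases w) auto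
    have "4 * (H * S) / s^3 = 4 * S / s"
      using assms by (simp add: H_def power2_eq_square power3_eq_cube)
    then show "cmod (emb \<sigma> (v - w)) < 4 * (1 + cmod \<sigma> + cmod \<sigma> ^ 2) / s"
      using close by (simp add: emb_diff S_def)
    show "\<bar>emb \<eta> (v - w)\<bar> \<le> s^2 * (1 + \<bar>\<eta>\<bar> + \<bar>\<eta>\<bar>^2)"
      using norm_emb_le[OF \<open>\<bar>a\<bar> \<le> H\<close> \<open>\<bar>b\<bar> \<le> H\<close> \<open>\<bar>c\<bar> \<le> H\<close>, of \<eta>] by (simp add: abc H_def)
  qed
qed

definition creduce :: "int \<Rightarrow> coords \<Rightarrow> coords" where
  "creduce L v = (case v of (a, b, c) \<Rightarrow> (a mod L, b mod L, c mod L))"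

lemma creduce_range: "L > 0 \<Longrightarrow> creduce L v \<in> {0..<L} \<times> {0..<L} \<times> {0..<L}"
  by (cases v) (simp add: creduce_def)

lemma creduce_eq_imp_cscale:
  assumes "creduce L v = creduce L w"
  obtains x where "v = w + cscale L x"
proof -
  obtain a b c a' b' c' where v: "v = (a, b, c)" and w: "w = (a', b', c')"
    by (cases v; cases w)
  have "L dvd a - a'" "L dvd b - b'" "L dvd c - c'"
    using assms by (simp_all add: v w creduce_def mod_eq_dvd_iff)
  then have "v = w + cscale L ((a - a') div L, (b - b') div L, (c - c') div L)"
    by (simp add: v w cscale_def)
  then show ?thesis
    by (rule that)
qed

locale int_cubic =
  fixes e1 e2 e3 :: int
begin

definition root :: "'a::field_char_0 \<Rightarrow> bool" where
  "root z \<longleftrightarrow> z^3 = of_int e1 * z^2 - of_int e2 * z + of_int e3"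

text \<open>The triple (a, b, c) stands for a + b z + c z^2.  Reducing products with
  z^3 = e1 z^2 - e2 z + e3 gives the multiplication \<open>cmul\<close>; \<open>cadj\<close> is the adjugate of the
  multiplication-by-v matrix, so that v times \<open>cadj v\<close> is the norm \<open>cnorm v\<close>.\<close>

definition cmul :: "coords \<Rightarrow> coords \<Rightarrow> coords" where
  "cmul v w = (case v of (a, b, c) \<Rightarrow> case w of (a', b', c') \<Rightarrow>
     (a*a' + (b*c' + c*b')*e3 + c*c'*e1*e3,
      a*b' + b*a' - (b*c' + c*b')*e2 + c*c'*(e3 - e1*e2),
      a*c' + b*b' + c*a' + (b*c' + c*b')*e1 + c*c'*(e1^2 - e2)))"

definition cnorm :: "coords \<Rightarrow> int" where
  "cnorm v = (case v of (a, b, c) \<Rightarrow>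
     c^3*e3^2 + b*c^2*e2*e3 + b^2*c*e1*e3 + b^3*e3 + a*c^2*e2^2 - 2*a*c^2*e1*e3 - 3*a*b*c*e3
     + a*b*c*e1*e2 + a*b^2*e2 - 2*a^2*c*e2 + a^2*c*e1^2 + a^2*b*e1 + a^3)"

definition cadj :: "coords \<Rightarrow> coords" where
  "cadj v = (case v of (a, b, c) \<Rightarrow>
     (c^2*e2^2 - c^2*e1*e3 - b*c*e3 + b*c*e1*e2 + b^2*e2 - 2*a*c*e2 + a*c*e1^2 + a*b*e1 + a^2,
      c^2*e3 - c^2*e1*e2 - b*c*e1^2 - b^2*e1 - a*b,
      c^2*e2 + b*c*e1 + b^2 - a*c))"

definition ctrace :: "coords \<Rightarrow> int" where
  "ctrace v = (case v of (a, b, c) \<Rightarrow> 3*a + b*e1 + c*(e1^2 - 2*e2))"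

fun cpow :: "coords \<Rightarrow> nat \<Rightarrow> coords" where
  "cpow v 0 = (1, 0, 0)"
| "cpow v (Suc n) = cmul v (cpow v n)"

lemma root_if_vieta:
  fixes x y z :: "'a::field_char_0"
  assumes "x + y + z = of_int e1" and "x*y + x*z + y*z = of_int e2" and "x*y*z = of_int e3"
  shows "root x"
  unfolding root_def assms[symmetric] by algebra

lemma emb_cmul:
  fixes z :: "'a::field_char_0"
  assumes "root z"
  shows "emb z (cmul v w) = emb z v * emb z w"
proof -
  have z3: "z^3 = of_int e1 * z^2 - of_int e2 * z + of_int e3"
    using assms by (simp add: root_def)
  then have z4: "z^4 = (of_int e1^2 - of_int e2) * z^2 + (of_int e3 - of_int e1 * of_int e2) * z
                       + of_int e1 * of_int e3"
    by algebra
  obtain a b c a' b' c' where "v = (a, b, c)" and "w = (a', b', c')"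
    by (cases v; cases w)
  moreover have "emb z (a, b, c) * emb z (a', b', c') = of_int (a*a') + of_int (a*b' + b*a') * z
      + of_int (a*c' + b*b' + c*a') * z^2 + of_int (b*c' + c*b') * z^3 + of_int (c*c') * z^4"
    by (simp add: emb_def) algebra
  moreover have "\<dots> = emb z (cmul (a, b, c) (a', b', c'))"
    unfolding z3 z4 by (simp add: emb_def cmul_def) algebra
  ultimately show ?thesis
    by simp
qed

lemma cmul_cadj: "cmul v (cadj v) = (cnorm v, 0, 0)"
proof -
  obtain a b c where v: "v = (a, b, c)"
    by (cases v)
  show ?thesis
    unfolding v by (simp add: cmul_def cadj_def cnorm_def) algebra
qed

lemma emb_cadj:
  assumes "root z"
  shows "emb z v * emb z (cadj v) = of_int (cnorm v)"
  using emb_cmul[OF assms, of v "cadj v"] by (simp add: cmul_cadj emb_def)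

lemma emb_cpow:
  assumes "root z"
  shows "emb z (cpow v n) = emb z v ^ n"
  by (induction n) (simp_all add: emb_cmul[OF assms])

lemma emb_norm_vieta:
  fixes x y z :: "'a::field_char_0"
  assumes "x + y + z = of_int e1" and "x*y + x*z + y*z = of_int e2" and "x*y*z = of_int e3"
  shows "emb x v * emb y v * emb z v = of_int (cnorm v)"
proof -
  obtain a b c where v: "v = (a, b, c)"
    by (cases v)
  show ?thesis
    unfolding v emb_def cnorm_def by (simp flip: assms) algebra
qed

lemma emb_trace_vieta:
  fixes x y z :: "'a::field_char_0"
  assumes "x + y + z = of_int e1" and "x*y + x*z + y*z = of_int e2"
  shows "emb x v + emb y v + emb z v = of_int (ctrace v)"
proof -
  obtain a b c where v: "v = (a, b, c)"
    by (cases v)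
  show ?thesis
    unfolding v emb_def ctrace_def by (simp flip: assms) algebra
qed

end

section \<open>A unit of the cubic order and its powers\<close>

locale cubic_one_real = int_cubic +
  fixes \<eta> :: real and \<sigma> :: complex
  assumes sum_roots: "complex_of_real \<eta> + \<sigma> + cnj \<sigma> = of_int e1"
    and sum_prod_roots: "complex_of_real \<eta> * \<sigma> + complex_of_real \<eta> * cnj \<sigma> + \<sigma> * cnj \<sigma> = of_int e2"
    and prod_roots: "complex_of_real \<eta> * \<sigma> * cnj \<sigma> = of_int e3"
    and sigma_nonreal: "Im \<sigma> \<noteq> 0"
    and emb_eta_eq_0: "emb \<eta> v = 0 \<Longrightarrow> v = (0, 0, 0)"
    and emb_sigma_eq_0: "emb \<sigma> v = 0 \<Longrightarrow> v = (0, 0, 0)"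
begin

lemma root_sigma: "root \<sigma>"
  by (rule root_if_vieta[of \<sigma> "complex_of_real \<eta>" "cnj \<sigma>"])
     (use sum_roots sum_prod_roots prod_roots in \<open>simp_all add: algebra_simps\<close>)

lemma root_eta: "root \<eta>"
proof -
  have "root (complex_of_real \<eta>)"
    by (rule root_if_vieta[OF sum_roots sum_prod_roots prod_roots])
  then have "complex_of_real (\<eta>^3) = complex_of_real (of_int e1 * \<eta>^2 - of_int e2 * \<eta> + of_int e3)"
    by (simp add: root_def)
  then show ?thesis
    unfolding root_def of_real_eq_iff .
qed

lemma emb_eta_cmul: "emb \<eta> (cmul v w) = emb \<eta> v * emb \<eta> w"
  by (rule emb_cmul[OF root_eta])

lemma emb_sigma_cmul: "emb \<sigma> (cmul v w) = emb \<sigma> v * emb \<sigma> w"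
  by (rule emb_cmul[OF root_sigma])

lemma norm_via_embeddings: "emb \<eta> v * (cmod (emb \<sigma> v))^2 = of_int (cnorm v)"
proof -
  have "emb (complex_of_real \<eta>) v * emb \<sigma> v * emb (cnj \<sigma>) v = of_int (cnorm v)"
    by (rule emb_norm_vieta) (use sum_roots sum_prod_roots prod_roots in simp_all)
  then have "complex_of_real (emb \<eta> v) * (emb \<sigma> v * cnj (emb \<sigma> v)) = of_int (cnorm v)"
    by (simp add: emb_of_real emb_cnj mult.assoc)
  then have "complex_of_real (emb \<eta> v * (cmod (emb \<sigma> v))^2) = complex_of_real (of_int (cnorm v))"
    by (simp only: of_real_mult complex_norm_square) simp
  then show ?thesis
    unfolding of_real_eq_iff .
qed

lemma trace_via_embeddings: "emb \<eta> v + 2 * Re (emb \<sigma> v) = of_int (ctrace v)"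
proof -
  have "emb (complex_of_real \<eta>) v + emb \<sigma> v + emb (cnj \<sigma>) v = of_int (ctrace v)"
    by (rule emb_trace_vieta) (use sum_roots sum_prod_roots in simp_all)
  then have "Re (emb (complex_of_real \<eta>) v + emb \<sigma> v + emb (cnj \<sigma>) v) = of_int (ctrace v)"
    by simp
  then show ?thesis
    by (simp add: emb_of_real emb_cnj)
qed

lemma cnorm_pos:
  assumes "emb \<eta> v > 0"
  shows "cnorm v > 0"
proof -
  have "v \<noteq> (0, 0, 0)"
    using assms by auto
  then have "emb \<sigma> v \<noteq> 0"
    using emb_sigma_eq_0 by blast
  then have "emb \<eta> v * (cmod (emb \<sigma> v))^2 > 0"
    using assms by simp
  then show ?thesis
    by (simp add: norm_via_embeddings)
qed

text \<open>With T = 1 + |eta| + eta^2 and S = 1 + |sigma| + |sigma|^2, the elements found by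
  \<open>exists_small_element\<close> have norm at most (s^2 T) (4 S / s)^2 = 16 T S^2.\<close>

definition norm_bound :: real where
  "norm_bound = 16 * (1 + \<bar>\<eta>\<bar> + \<bar>\<eta>\<bar>^2) * (1 + cmod \<sigma> + cmod \<sigma> ^ 2)^2"

definition bounded_norm_elements :: "coords set" where
  "bounded_norm_elements = {w. emb \<eta> w > 0 \<and> cnorm w \<le> \<lfloor>norm_bound\<rfloor>}"

lemma exists_bounded_norm_element:
  fixes s :: nat
  assumes "s \<ge> 1"
  obtains w where "w \<in> bounded_norm_elements"
    and "cmod (emb \<sigma> w) < 4 * (1 + cmod \<sigma> + cmod \<sigma> ^ 2) / s"
proof -
  obtain w where "w \<noteq> (0, 0, 0)" and small: "cmod (emb \<sigma> w) < 4 * (1 + cmod \<sigma> + cmod \<sigma> ^ 2) / s"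
    and bounded: "\<bar>emb \<eta> w\<bar> \<le> s^2 * (1 + \<bar>\<eta>\<bar> + \<bar>\<eta>\<bar>^2)"
    by (rule exists_small_element[OF assms])
  define w' where "w' = (if emb \<eta> w > 0 then w else - w)"
  have "emb \<eta> w \<noteq> 0"
    using \<open>w \<noteq> (0, 0, 0)\<close> emb_eta_eq_0 by blast
  then have eta: "emb \<eta> w' = \<bar>emb \<eta> w\<bar>" and "emb \<eta> w' > 0"
    by (auto simp: w'_def emb_uminus)
  have sigma: "cmod (emb \<sigma> w') = cmod (emb \<sigma> w)"
    by (simp add: w'_def emb_uminus)
  have "real s \<noteq> 0"
    using assms by simp
  have "of_int (cnorm w') = \<bar>emb \<eta> w\<bar> * (cmod (emb \<sigma> w))^2"
    using norm_via_embeddings[of w'] eta sigma by simp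
  also have "\<dots> \<le> (s^2 * (1 + \<bar>\<eta>\<bar> + \<bar>\<eta>\<bar>^2)) * (4 * (1 + cmod \<sigma> + cmod \<sigma> ^ 2) / s)^2"
    by (rule mult_mono[OF bounded power_mono]) (use small in auto)
  also have "\<dots> = norm_bound"
    unfolding norm_bound_def using \<open>real s \<noteq> 0\<close>
    by (simp add: power_divide power_mult_distrib) (simp add: power2_eq_square algebra_simps)
  finally have "w' \<in> bounded_norm_elements"
    using \<open>emb \<eta> w' > 0\<close> by (simp add: bounded_norm_elements_def le_floor_iff)
  then show ?thesis
    using that small sigma by simp
qed

lemma infinite_bounded_norm_elements: "infinite bounded_norm_elements"
proof
  assume finite: "finite bounded_norm_elements"
  define S where "S = 1 + cmod \<sigma> + cmod \<sigma> ^ 2"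
  have "S > 0"
    by (simp add: S_def add_pos_nonneg)
  have "bounded_norm_elements \<noteq> {}"
    using exists_bounded_norm_element[of 1] by auto
  define m where "m = Min ((\<lambda>w. cmod (emb \<sigma> w)) ` bounded_norm_elements)"
  have "cmod (emb \<sigma> w) > 0" if "w \<in> bounded_norm_elements" for w
    using that emb_sigma_eq_0[of w] by (force simp: bounded_norm_elements_def)
  then have "m > 0"
    unfolding m_def using finite \<open>bounded_norm_elements \<noteq> {}\<close> by simp
  obtain s :: nat where s: "s > 4 * S / m"
    using reals_Archimedean2 by blast
  moreover have "4 * S / m > 0"
    using \<open>S > 0\<close> \<open>m > 0\<close> by simp
  ultimately have "s \<ge> 1"
    by simp
  then obtain w where "w \<in> bounded_norm_elements" and "cmod (emb \<sigma> w) < 4 * S / s"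
    using exists_bounded_norm_element unfolding S_def by blast
  moreover have "4 * S / s < m"
    using s \<open>m > 0\<close> \<open>s \<ge> 1\<close> \<open>S > 0\<close> by (simp add: field_simps)
  moreover have "m \<le> cmod (emb \<sigma> w)"
    unfolding m_def using finite \<open>w \<in> bounded_norm_elements\<close> by simp
  ultimately show False
    by simp
qed

lemma unit_of_congruent_pair:
  assumes "0 < emb \<eta> w2" and "emb \<eta> w2 < emb \<eta> w1" and "cnorm w1 = cnorm w2"
    and "cnorm w2 dvd L" and "w1 = w2 + cscale L x"
  obtains e where "emb \<eta> e > 1" and "emb \<eta> e * (cmod (emb \<sigma> e))^2 = 1"
proof -
  define N where "N = cnorm w2"
  obtain k where "L = N * k"
    using assms(4) unfolding N_def by (elim dvdE)
  \<comment> \<open>e = w1 * cadj w2 / N, which is integral because w1 * cadj w2 = N + L * x * cadj w2.\<close>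
  define e where "e = (1, 0, 0) + cscale k (cmul x (cadj w2))"
  have quotient: "emb z e * emb z w2 = emb z w1" if "root z" for z :: "'a::field_char_0"
  proof -
    have "emb z e = 1 + of_int k * (emb z x * emb z (cadj w2))"
      by (simp add: e_def emb_add emb_cscale emb_cmul[OF that])
    then have "emb z e * emb z w2 = emb z w2 + of_int k * emb z x * (emb z w2 * emb z (cadj w2))"
      by (simp add: algebra_simps)
    also have "\<dots> = emb z w2 + of_int L * emb z x"
      by (simp add: emb_cadj[OF that] \<open>L = N * k\<close> N_def)
    also have "\<dots> = emb z w1"
      by (simp add: assms(5) emb_add emb_cscale)
    finally show ?thesis .
  qed
  have "emb \<eta> e * emb \<eta> w2 > 1 * emb \<eta> w2"
    using quotient[OF root_eta] assms(2) by simp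
  then have "emb \<eta> e > 1"
    using assms(1) by (simp only: mult_less_cancel_right)
  moreover have "(emb \<eta> e * (cmod (emb \<sigma> e))^2) * of_int N = 1 * of_int N"
  proof -
    have "(emb \<eta> e * (cmod (emb \<sigma> e))^2) * (emb \<eta> w2 * (cmod (emb \<sigma> w2))^2)
        = (emb \<eta> e * emb \<eta> w2) * (cmod (emb \<sigma> e * emb \<sigma> w2))^2"
      by (simp add: norm_mult power_mult_distrib)
    also have "\<dots> = emb \<eta> w1 * (cmod (emb \<sigma> w1))^2"
      using quotient[OF root_eta] quotient[OF root_sigma] by simp
    finally show ?thesis
      by (simp add: norm_via_embeddings N_def assms(3))
  qed
  moreover have "N > 0"
    using cnorm_pos[OF assms(1)] by (simp add: N_def)
  ultimately show ?thesis
    using that by simp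
qed

definition norm_modulus :: int where
  "norm_modulus = fact (nat \<lfloor>norm_bound\<rfloor>)"

lemma cnorm_dvd_norm_modulus:
  assumes "w \<in> bounded_norm_elements"
  shows "cnorm w dvd norm_modulus"
proof -
  have "1 \<le> cnorm w" and "cnorm w \<le> \<lfloor>norm_bound\<rfloor>"
    using assms cnorm_pos[of w] by (simp_all add: bounded_norm_elements_def)
  then have "nat (cnorm w) dvd fact (nat \<lfloor>norm_bound\<rfloor>)"
    by (intro dvd_fact) auto
  then show ?thesis
    using \<open>1 \<le> cnorm w\<close> by (simp add: norm_modulus_def flip: int_dvd_int_iff)
qed

lemma exists_congruent_pair:
  assumes "L > 0"
  obtains w1 w2 where "w1 \<in> bounded_norm_elements" and "w2 \<in> bounded_norm_elements"
    and "w1 \<noteq> w2" and "cnorm w1 = cnorm w2" and "creduce L w1 = creduce L w2"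
proof -
  define tag where "tag w = (cnorm w, creduce L w)" for w
  have "tag w \<in> {1..\<lfloor>norm_bound\<rfloor>} \<times> ({0..<L} \<times> {0..<L} \<times> {0..<L})"
    if "w \<in> bounded_norm_elements" for w
    using that cnorm_pos[of w] creduce_range[OF assms, of w]
    by (simp add: tag_def bounded_norm_elements_def)
  then have "tag ` bounded_norm_elements \<subseteq> {1..\<lfloor>norm_bound\<rfloor>} \<times> ({0..<L} \<times> {0..<L} \<times> {0..<L})"
    by blast
  then have "finite (tag ` bounded_norm_elements)"
    by (rule finite_subset) simp
  then obtain w0 where fiber: "infinite {w \<in> bounded_norm_elements. tag w = tag w0}"
    using pigeonhole_infinite[OF infinite_bounded_norm_elements] by blast
  define F where "F = {w \<in> bounded_norm_elements. tag w = tag w0}"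
  have "infinite F"
    using fiber by (simp add: F_def)
  then obtain w1 where "w1 \<in> F"
    by (metis ex_in_conv infinite_imp_nonempty)
  moreover obtain w2 where "w2 \<in> F - {w1}"
    using \<open>infinite F\<close> by (metis ex_in_conv infinite_imp_nonempty infinite_remove)
  ultimately show ?thesis
    using that[of w1 w2] by (auto simp: F_def tag_def)
qed

lemma exists_unit:
  obtains e where "emb \<eta> e > 1" and "emb \<eta> e * (cmod (emb \<sigma> e))^2 = 1"
proof -
  have unit: "\<exists>e. emb \<eta> e > 1 \<and> emb \<eta> e * (cmod (emb \<sigma> e))^2 = 1"
    if "w \<in> bounded_norm_elements" and w': "w' \<in> bounded_norm_elements"
      and norm: "cnorm w = cnorm w'" and congruent: "creduce norm_modulus w = creduce norm_modulus w'"
      and less: "emb \<eta> w' < emb \<eta> w" for w w'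
  proof -
    obtain x where "w = w' + cscale norm_modulus x"
      using creduce_eq_imp_cscale[OF congruent] .
    moreover have "0 < emb \<eta> w'"
      using w' by (simp add: bounded_norm_elements_def)
    ultimately show ?thesis
      using unit_of_congruent_pair[of w' w norm_modulus x] less norm cnorm_dvd_norm_modulus[OF w']
      by blast
  qed
  have "norm_modulus > 0"
    by (simp add: norm_modulus_def)
  then obtain w1 w2 where w1: "w1 \<in> bounded_norm_elements" and w2: "w2 \<in> bounded_norm_elements"
    and "w1 \<noteq> w2" and norm: "cnorm w1 = cnorm w2"
    and congruent: "creduce norm_modulus w1 = creduce norm_modulus w2"
    by (rule exists_congruent_pair)
  have "w1 - w2 \<noteq> (0, 0, 0)"
    using \<open>w1 \<noteq> w2\<close> by (cases w1; cases w2) auto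
  then have "emb \<eta> (w1 - w2) \<noteq> 0"
    using emb_eta_eq_0 by blast
  then have "emb \<eta> w1 \<noteq> emb \<eta> w2"
    by (simp add: emb_diff)
  then have "\<exists>e. emb \<eta> e > 1 \<and> emb \<eta> e * (cmod (emb \<sigma> e))^2 = 1"
    using unit[OF w1 w2 norm congruent] unit[OF w2 w1 norm[symmetric] congruent[symmetric]]
    by (meson linorder_neqE_linordered_idom)
  then show ?thesis
    using that by blast
qed

lemma eta_add_Re_sigma: "\<eta> + 2 * Re \<sigma> = of_int e1"
  using arg_cong[OF sum_roots, of Re] by simp

definition large_unit :: coords where
  "large_unit = (SOME e. emb \<eta> e > 1 \<and> emb \<eta> e * (cmod (emb \<sigma> e))^2 = 1)"

abbreviation \<epsilon> :: real where
  "\<epsilon> \<equiv> emb \<eta> large_unit"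

abbreviation \<omega> :: complex where
  "\<omega> \<equiv> emb \<sigma> large_unit"

lemma eps_gt_1: "\<epsilon> > 1" and eps_mult_cmod_omega_sq: "\<epsilon> * (cmod \<omega>)^2 = 1"
proof -
  obtain e where "emb \<eta> e > 1 \<and> emb \<eta> e * (cmod (emb \<sigma> e))^2 = 1"
    using exists_unit by blast
  then show "\<epsilon> > 1" "\<epsilon> * (cmod \<omega>)^2 = 1"
    unfolding large_unit_def by (metis (mono_tags, lifting) someI_ex)+
qed

lemma cmod_omega_lt_1: "cmod \<omega> < 1"
proof -
  have "(cmod \<omega>)^2 < 1"
  proof (rule ccontr)
    assume "\<not> (cmod \<omega>)^2 < 1"
    then have "\<epsilon> * 1 \<le> \<epsilon> * (cmod \<omega>)^2"
      using eps_gt_1 by (intro mult_left_mono) auto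
    then show False
      using eps_gt_1 eps_mult_cmod_omega_sq by simp
  qed
  then show ?thesis
    by (simp add: abs_square_less_1)
qed

lemma omega_power_not_real:
  assumes "k > 0"
  shows "Im (\<omega> ^ k) \<noteq> 0"
proof
  assume "Im (\<omega> ^ k) = 0"
  obtain a b c where p: "cpow large_unit k = (a, b, c)"
    by (cases "cpow large_unit k")
  have sigma: "emb \<sigma> (a, b, c) = \<omega> ^ k" and eta: "emb \<eta> (a, b, c) = \<epsilon> ^ k"
    using emb_cpow[OF root_sigma, of large_unit k] emb_cpow[OF root_eta, of large_unit k] p by simp_all
  have "Im (emb \<sigma> (a, b, c)) = Im \<sigma> * (of_int b + 2 * of_int c * Re \<sigma>)"
    by (simp add: emb_def power2_eq_square algebra_simps)
  then have "of_int b + 2 * of_int c * Re \<sigma> = 0"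
    using \<open>Im (\<omega> ^ k) = 0\<close> sigma sigma_nonreal by simp
  moreover have "of_int e1 - \<eta> = 2 * Re \<sigma>"
    using eta_add_Re_sigma by linarith
  ultimately have "of_int b + of_int c * (of_int e1 - \<eta>) = (0::real)"
    by (simp add: algebra_simps)
  then have "emb \<eta> (b + c * e1, - c, 0) = 0"
    by (simp add: emb_def algebra_simps)
  then have "(b + c * e1, - c, 0) = (0, 0, 0)"
    using emb_eta_eq_0 by blast
  then have "b = 0" "c = 0"
    by auto
  then have "\<omega> ^ k = of_int a" and "\<epsilon> ^ k = of_int a"
    using sigma eta by (simp_all add: emb_def)
  then have "cmod \<omega> ^ k = \<bar>\<epsilon> ^ k\<bar>"
    by (simp flip: norm_power)
  also have "\<dots> = \<epsilon> ^ k"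
    using eps_gt_1 by simp
  finally have "cmod \<omega> ^ k = \<epsilon> ^ k" .
  moreover have "cmod \<omega> ^ k \<le> 1"
    using cmod_omega_lt_1 by (simp add: power_le_one)
  moreover have "\<epsilon> ^ k > 1"
    using eps_gt_1 assms by simp
  ultimately show False
    by simp
qed

lemma omega_arg_irrational: "Arg \<omega> / (2 * pi) \<notin> \<rat>"
proof
  assume "Arg \<omega> / (2 * pi) \<in> \<rat>"
  then obtain p q where "q > 0" and "Arg \<omega> / (2 * pi) = of_int p / of_int q"
    by (rule Rats_cases')
  then have "real (nat q) * Arg \<omega> = (2 * pi) * of_int p"
    by (simp add: field_simps)
  then have "Im (\<omega> ^ nat q) = 0"
    by (simp add: power_eq_cmod_power_cis[of \<omega>])
  then show False
    using omega_power_not_real[of "nat q"] \<open>q > 0\<close> by simp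
qed

lemma trace_approximation:
  assumes "of_int M * \<alpha> = emb \<eta> a"
  shows "of_int (M * ctrace v) * \<alpha> - of_int (ctrace (cmul v a))
           = 2 * Re (emb \<sigma> v * (complex_of_real (emb \<eta> a) - emb \<sigma> a))"
proof -
  have "of_int (M * ctrace v) * \<alpha> = (emb \<eta> v + 2 * Re (emb \<sigma> v)) * emb \<eta> a"
    by (simp flip: trace_via_embeddings assms)
  moreover have "of_int (ctrace (cmul v a)) = emb \<eta> v * emb \<eta> a + 2 * Re (emb \<sigma> v * emb \<sigma> a)"
    by (simp flip: trace_via_embeddings add: emb_eta_cmul emb_sigma_cmul)
  ultimately show ?thesis
    by (simp add: algebra_simps)
qed

lemma trace_large_unit_power: "of_int (ctrace (cpow large_unit n)) = \<epsilon> ^ n + 2 * Re (\<omega> ^ n)"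
  by (simp flip: trace_via_embeddings add: emb_cpow[OF root_eta] emb_cpow[OF root_sigma])

lemma dist_nint_large_unit_power_le:
  assumes "of_int M * \<alpha> = emb \<eta> a"
  shows "dist_nint (of_int (M * ctrace (cpow large_unit n)) * \<alpha>)
           \<le> 2 * cmod \<omega> ^ n * \<bar>Re (cis (real n * Arg \<omega>) * (complex_of_real (emb \<eta> a) - emb \<sigma> a))\<bar>"
proof -
  have "dist_nint (of_int (M * ctrace (cpow large_unit n)) * \<alpha>)
      \<le> \<bar>of_int (M * ctrace (cpow large_unit n)) * \<alpha> - of_int (ctrace (cmul (cpow large_unit n) a))\<bar>"
    by (rule dist_nint_le)
  also have "\<dots> = 2 * cmod \<omega> ^ n * \<bar>Re (cis (real n * Arg \<omega>) * (complex_of_real (emb \<eta> a) - emb \<sigma> a))\<bar>"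
    unfolding trace_approximation[OF assms] emb_cpow[OF root_sigma]
    by (subst power_eq_cmod_power_cis) (simp add: abs_mult mult.assoc)
  finally show ?thesis .
qed

lemma eps_power_mult_cmod_omega_power_sq: "\<epsilon> ^ n * (cmod \<omega> ^ n)^2 = 1"
proof -
  have "\<epsilon> ^ n * (cmod \<omega> ^ n)^2 = (\<epsilon> * (cmod \<omega>)^2) ^ n"
    by (simp add: power2_eq_square power_mult_distrib)
  then show ?thesis
    using eps_mult_cmod_omega_sq by simp
qed

lemma abs_trace_large_unit_power_le:
  "\<bar>of_int (ctrace (cpow large_unit n))\<bar> \<le> \<epsilon> ^ n + 2 * cmod \<omega> ^ n"
proof -
  have "\<bar>Re (\<omega> ^ n)\<bar> \<le> cmod \<omega> ^ n"
    using abs_Re_le_cmod[of "\<omega> ^ n"] by (simp add: norm_power)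
  moreover have "0 < \<epsilon> ^ n"
    using eps_gt_1 by simp
  ultimately show ?thesis
    unfolding trace_large_unit_power abs_le_iff by linarith
qed

lemma large_unit_power_product_le:
  fixes n :: nat
  assumes "M > 0" and "of_int M * \<alpha> = emb \<eta> a" and "of_int M * \<beta> = emb \<eta> b"
  defines "q \<equiv> real_of_int (M * ctrace (cpow large_unit n))"
  shows "q * dist_nint (q * \<alpha>) * dist_nint (q * \<beta>)
           \<le> 12 * M * cmod (complex_of_real (emb \<eta> b) - emb \<sigma> b)
              * \<bar>Re (cis (real n * Arg \<omega>) * (complex_of_real (emb \<eta> a) - emb \<sigma> a))\<bar>"
    (is "_ \<le> 12 * _ * ?B * ?\<rho>")
proof -
  define c where "c = cmod \<omega> ^ n"
  have "0 \<le> c" "c \<le> 1"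
    using cmod_omega_lt_1 by (simp_all add: c_def power_le_one)
  have "\<epsilon> ^ n * c^2 = 1" and "0 < \<epsilon> ^ n"
    using eps_power_mult_cmod_omega_power_sq eps_gt_1 by (simp_all add: c_def)
  have q_le: "\<bar>q\<bar> \<le> M * (\<epsilon> ^ n + 2 * c)"
    using assms(1) abs_trace_large_unit_power_le[of n] by (simp add: q_def c_def abs_mult mult_left_mono)
  have dist_a: "dist_nint (q * \<alpha>) \<le> 2 * c * ?\<rho>"
    unfolding q_def c_def by (rule dist_nint_large_unit_power_le[OF assms(2)])
  have "\<bar>Re (cis (real n * Arg \<omega>) * (complex_of_real (emb \<eta> b) - emb \<sigma> b))\<bar> \<le> ?B"
    using abs_Re_le_cmod[of "cis (real n * Arg \<omega>) * (complex_of_real (emb \<eta> b) - emb \<sigma> b)"]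
    by (simp add: norm_mult)
  then have dist_b: "dist_nint (q * \<beta>) \<le> 2 * c * ?B"
    using dist_nint_large_unit_power_le[OF assms(3), of n] \<open>0 \<le> c\<close> unfolding q_def c_def
    by (meson mult_left_mono order_trans zero_le_mult_iff zero_le_numeral)
  have "0 \<le> dist_nint (q * \<alpha>)" and "0 \<le> dist_nint (q * \<beta>)"
    by (simp_all add: dist_nint_def)
  then have "q * dist_nint (q * \<alpha>) * dist_nint (q * \<beta>) \<le> \<bar>q\<bar> * dist_nint (q * \<alpha>) * dist_nint (q * \<beta>)"
    by (intro mult_right_mono) auto
  also have "\<dots> \<le> (M * (\<epsilon> ^ n + 2 * c)) * (2 * c * ?\<rho>) * (2 * c * ?B)"
    using q_le dist_a dist_b \<open>0 \<le> dist_nint (q * \<alpha>)\<close> \<open>0 \<le> dist_nint (q * \<beta>)\<close>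
      \<open>0 \<le> c\<close> \<open>0 < \<epsilon> ^ n\<close> assms(1)
    by (intro mult_mono) auto
  also have "\<dots> = 4 * M * ?B * ?\<rho> * (\<epsilon> ^ n * c^2 + 2 * c^3)"
    by (simp add: algebra_simps power2_eq_square power3_eq_cube)
  also have "\<dots> \<le> 4 * M * ?B * ?\<rho> * 3"
    using \<open>\<epsilon> ^ n * c^2 = 1\<close> \<open>0 \<le> c\<close> \<open>c \<le> 1\<close> assms(1)
    by (intro mult_left_mono) (auto simp: power_le_one)
  finally show ?thesis
    by simp
qed

lemma trace_large_unit_power_ge: "\<epsilon> ^ n - 2 \<le> of_int (ctrace (cpow large_unit n))"
proof -
  have "\<bar>Re (\<omega> ^ n)\<bar> \<le> cmod \<omega> ^ n"
    using abs_Re_le_cmod[of "\<omega> ^ n"] by (simp add: norm_power)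
  also have "\<dots> \<le> 1"
    using cmod_omega_lt_1 by (simp add: power_le_one)
  finally show ?thesis
    unfolding trace_large_unit_power by linarith
qed

lemma frequently_small_product:
  assumes "M > 0" and "of_int M * \<alpha> = emb \<eta> a" and "of_int M * \<beta> = emb \<eta> b" and "d > 0"
  shows "\<exists>m > B. real m * dist_nint (real m * \<alpha>) * dist_nint (real m * \<beta>) < d"
proof -
  define Wa where "Wa = complex_of_real (emb \<eta> a) - emb \<sigma> a"
  define Wb where "Wb = complex_of_real (emb \<eta> b) - emb \<sigma> b"
  define C where "C = 12 * of_int M * (cmod Wb + 1)"
  have "C > 0"
    using assms(1) by (simp add: C_def add_nonneg_pos)
  obtain n0 where n0: "\<epsilon> ^ n0 > real B / of_int M + 2"
    using real_arch_pow[OF eps_gt_1] by blast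
  obtain n where "n \<ge> n0" and small: "\<bar>Re (cis (real n * Arg \<omega>) * Wa)\<bar> < d / C"
    using irrational_rotation_Re_small[OF omega_arg_irrational, of "d / C" n0 Wa] assms(4) \<open>C > 0\<close>
    by auto
  define q where "q = M * ctrace (cpow large_unit n)"
  have "\<epsilon> ^ n0 \<le> \<epsilon> ^ n"
    using eps_gt_1 \<open>n \<ge> n0\<close> by (simp add: power_increasing)
  then have "real B / of_int M < \<epsilon> ^ n - 2"
    using n0 by linarith
  also have "\<dots> \<le> of_int (ctrace (cpow large_unit n))"
    by (rule trace_large_unit_power_ge)
  finally have "real B < of_int q"
    using assms(1) by (simp add: q_def pos_divide_less_eq mult.commute)
  moreover have "of_int q * dist_nint (of_int q * \<alpha>) * dist_nint (of_int q * \<beta>)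
      \<le> 12 * of_int M * cmod Wb * \<bar>Re (cis (real n * Arg \<omega>) * Wa)\<bar>"
    unfolding q_def Wa_def Wb_def by (rule large_unit_power_product_le[OF assms(1-3)])
  moreover have "12 * of_int M * cmod Wb * \<bar>Re (cis (real n * Arg \<omega>) * Wa)\<bar> < d"
  proof -
    have "12 * of_int M * cmod Wb * \<bar>Re (cis (real n * Arg \<omega>) * Wa)\<bar>
        \<le> C * \<bar>Re (cis (real n * Arg \<omega>) * Wa)\<bar>"
      using assms(1) by (intro mult_right_mono) (auto simp: C_def)
    also have "\<dots> < C * (d / C)"
      using small \<open>C > 0\<close> by (intro mult_strict_left_mono)
    also have "\<dots> = d"
      using \<open>C > 0\<close> by simp
    finally show ?thesis .
  qed
  ultimately show ?thesis
    by (intro exI[of _ "nat q"]) auto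
qed

theorem simultaneous_approximation:
  assumes "Ma > 0" and "of_int Ma * \<alpha> = emb \<eta> a" and "Mb > 0" and "of_int Mb * \<beta> = emb \<eta> b"
  shows "\<exists>\<psi> :: nat \<Rightarrow> nat. strict_mono \<psi> \<and> (\<forall>n. \<psi> n > 0) \<and>
           (\<lambda>n. real (\<psi> n) * dist_nint (real (\<psi> n) * \<alpha>) * dist_nint (real (\<psi> n) * \<beta>))
             \<longlonglongrightarrow> 0"
proof -
  have "Ma * Mb > 0"
    using assms(1,3) by simp
  moreover have "of_int (Ma * Mb) * \<alpha> = emb \<eta> (cscale Mb a)"
    using assms(2) by (simp add: emb_cscale flip: assms(2))
  moreover have "of_int (Ma * Mb) * \<beta> = emb \<eta> (cscale Ma b)"
    using assms(4) by (simp add: emb_cscale flip: assms(4))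
  ultimately have "\<exists>m > B. real m * dist_nint (real m * \<alpha>) * dist_nint (real m * \<beta>) < d"
    if "d > 0" for d B
    using frequently_small_product that by blast
  then show ?thesis
    by (intro frequently_small_imp_subseq_tendsto_0) (simp_all add: dist_nint_def)
qed

end

section \<open>Reduction to a monic integral cubic\<close>

lemma scaled_cubic_root_iff:
  fixes f :: "rat poly" and z :: "'a::field_char_0"
  assumes "degree f = 3" and "D \<noteq> 0"
    and e1: "of_int e1 = - (of_int D * coeff f 2 / lead_coeff f)"
    and e2: "of_int e2 = of_int D ^ 2 * coeff f 1 / lead_coeff f"
    and e3: "of_int e3 = - (of_int D ^ 3 * coeff f 0 / lead_coeff f)"
  shows "poly (map_poly of_rat f) z = 0 \<longleftrightarrow> int_cubic.root e1 e2 e3 (of_int D * z)"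
proof -
  define c where "c i = (of_rat (coeff f i) :: 'a)" for i
  have "f \<noteq> 0"
    using assms(1) by auto
  then have "lead_coeff f \<noteq> 0"
    by simp
  then have "c 3 \<noteq> 0"
    using assms(1) by (simp add: c_def)
  have "(of_int e1 :: 'a) = - (of_int D * c 2 / c 3)" and "(of_int e2 :: 'a) = of_int D ^ 2 * c 1 / c 3"
    and "(of_int e3 :: 'a) = - (of_int D ^ 3 * c 0 / c 3)"
    using arg_cong[OF e1, of "of_rat :: rat \<Rightarrow> 'a"] arg_cong[OF e2, of "of_rat :: rat \<Rightarrow> 'a"]
      arg_cong[OF e3, of "of_rat :: rat \<Rightarrow> 'a"] assms(1)
    by (simp_all add: c_def of_rat_minus of_rat_divide of_rat_mult of_rat_power)
  then have "(of_int D * z)^3 - (of_int e1 * (of_int D * z)^2 - of_int e2 * (of_int D * z) + of_int e3)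
      = of_int D ^ 3 / c 3 * poly (map_poly of_rat f) z"
    using poly_of_rat_degree_le_3[of f z] assms(1) \<open>c 3 \<noteq> 0\<close>
    by (simp add: c_def field_simps power2_eq_square power3_eq_cube)
  moreover have "of_int D ^ 3 / c 3 \<noteq> 0"
    using assms(2) \<open>c 3 \<noteq> 0\<close> by simp
  ultimately show ?thesis
    unfolding int_cubic.root_def by (metis eq_iff_diff_eq_0 mult_eq_0_iff)
qed

lemma exists_integral_scaling:
  fixes f :: "rat poly"
  obtains D e1 e2 e3 :: int where "D > 0"
    and "of_int e1 = - (of_int D * coeff f 2 / lead_coeff f)"
    and "of_int e2 = of_int D ^ 2 * coeff f 1 / lead_coeff f"
    and "of_int e3 = - (of_int D ^ 3 * coeff f 0 / lead_coeff f)"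
proof -
  define l where "l = lead_coeff f"
  obtain D :: int where "D > 0"
    and int: "\<And>x. x \<in> {coeff f 2 / l, coeff f 1 / l, coeff f 0 / l} \<Longrightarrow> of_int D * x \<in> \<int>"
    by (rule rat_common_denominator[of "{coeff f 2 / l, coeff f 1 / l, coeff f 0 / l}"]) auto
  obtain a2 a1 a0 where a2: "of_int D * (coeff f 2 / l) = of_int a2"
    and a1: "of_int D * (coeff f 1 / l) = of_int a1" and a0: "of_int D * (coeff f 0 / l) = of_int a0"
    using int by (metis Ints_cases insertCI)
  show ?thesis
  proof (rule that[of D "- a2" "D * a1" "- (D^2 * a0)"])
    show "of_int (- a2) = - (of_int D * coeff f 2 / lead_coeff f)"
      by (simp add: a2[symmetric] l_def)
    show "of_int (D * a1) = of_int D ^ 2 * coeff f 1 / lead_coeff f"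
      by (simp add: a1[symmetric] l_def power2_eq_square mult.assoc)
    show "of_int (- (D^2 * a0)) = - (of_int D ^ 3 * coeff f 0 / lead_coeff f)"
      by (simp add: a0[symmetric] l_def power2_eq_square power3_eq_cube mult.assoc)
  qed (rule \<open>D > 0\<close>)
qed

lemma emb_scaled_root_eq_0:
  fixes f :: "rat poly" and \<zeta> :: "'a::field_char_0"
  assumes "irreducible f" and "degree f = 3" and "poly (map_poly of_rat f) \<zeta> = 0"
    and "D \<noteq> 0" and "emb (of_int D * \<zeta>) v = 0"
  shows "v = (0, 0, 0)"
proof -
  obtain a b c where v: "v = (a, b, c)"
    by (cases v)
  have "of_rat (of_int a) + of_rat (of_int (b * D)) * \<zeta> + of_rat (of_int (c * D^2)) * \<zeta>^2 = (0::'a)"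
    using assms(5) by (simp add: v emb_def of_rat_mult algebra_simps power2_eq_square)
  then have "of_int a = (0::rat) \<and> of_int (b * D) = (0::rat) \<and> of_int (c * D^2) = (0::rat)"
    by (rule irreducible_cubic_root_rat_independent[OF assms(1-3)])
  then show ?thesis
    using assms(4) by (simp add: v)
qed

lemma negative_discrim_conj_roots:
  fixes u v :: real
  assumes "discrim 1 u v < 0"
  obtains \<sigma> where "Im \<sigma> \<noteq> 0" and "\<sigma> + cnj \<sigma> = - of_real u" and "\<sigma> * cnj \<sigma> = of_real v"
proof
  define \<sigma> where "\<sigma> = Complex (- u / 2) (sqrt (- discrim 1 u v) / 2)"
  show "Im \<sigma> \<noteq> 0"
    using assms by (simp add: \<sigma>_def)
  have "sqrt (- discrim 1 u v) ^ 2 = 4 * v - u^2"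
    using assms by (simp add: discrim_def)
  then show "\<sigma> + cnj \<sigma> = - of_real u" and "\<sigma> * cnj \<sigma> = of_real v"
    by (simp_all add: \<sigma>_def complex_eq_iff power2_eq_square field_simps)
qed

lemma real_cubic_unique_simple_root:
  fixes s1 s2 s3 \<eta> :: real
  assumes unique: "\<And>x. x^3 = s1 * x^2 - s2 * x + s3 \<longleftrightarrow> x = \<eta>"
    and simple: "3 * \<eta>^2 - 2 * s1 * \<eta> + s2 \<noteq> 0"
  obtains \<sigma> where "Im \<sigma> \<noteq> 0" and "complex_of_real \<eta> + \<sigma> + cnj \<sigma> = of_real s1"
    and "complex_of_real \<eta> * \<sigma> + complex_of_real \<eta> * cnj \<sigma> + \<sigma> * cnj \<sigma> = of_real s2"
    and "complex_of_real \<eta> * \<sigma> * cnj \<sigma> = of_real s3"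
proof -
  define u where "u = \<eta> - s1"
  define v where "v = s2 + \<eta> * (\<eta> - s1)"
  have s3: "s3 = \<eta>^3 - s1 * \<eta>^2 + s2 * \<eta>"
    using unique[of \<eta>] by simp
  have factor: "x^3 - (s1 * x^2 - s2 * x + s3) = (x - \<eta>) * (1 * x^2 + u * x + v)" for x
    by (simp add: s3 u_def v_def algebra_simps power2_eq_square power3_eq_cube)
  have "discrim 1 u v < 0"
  proof (rule ccontr)
    assume "\<not> discrim 1 u v < 0"
    then obtain r where r: "1 * r^2 + u * r + v = 0"
      using discriminant_nonneg_ex[of 1 u v] by auto
    then have "r = \<eta>"
      using unique[of r] factor[of r] by simp
    then have "3 * \<eta>^2 - 2 * s1 * \<eta> + s2 = 0"
      using r by (simp add: u_def v_def algebra_simps power2_eq_square)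
    with simple show False ..
  qed
  then obtain \<sigma> where "Im \<sigma> \<noteq> 0" and sum: "\<sigma> + cnj \<sigma> = - of_real u" and prod: "\<sigma> * cnj \<sigma> = of_real v"
    by (rule negative_discrim_conj_roots)
  show ?thesis
  proof (rule that)
    show "Im \<sigma> \<noteq> 0"
      by fact
    show "complex_of_real \<eta> + \<sigma> + cnj \<sigma> = of_real s1"
      using sum by (simp add: u_def add.assoc)
    have "complex_of_real \<eta> * \<sigma> + complex_of_real \<eta> * cnj \<sigma> + \<sigma> * cnj \<sigma>
        = complex_of_real \<eta> * (\<sigma> + cnj \<sigma>) + \<sigma> * cnj \<sigma>"
      by (simp add: algebra_simps)
    also have "\<dots> = of_real (\<eta> * (- u) + v)"
      using sum prod by simp
    also have "\<eta> * (- u) + v = s2"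
      by (simp add: u_def v_def algebra_simps)
    finally show "complex_of_real \<eta> * \<sigma> + complex_of_real \<eta> * cnj \<sigma> + \<sigma> * cnj \<sigma> = of_real s2" .
    have "complex_of_real \<eta> * \<sigma> * cnj \<sigma> = of_real (\<eta> * v)"
      using prod by (simp add: mult.assoc)
    also have "\<eta> * v = s3"
      by (simp add: s3 v_def algebra_simps power2_eq_square power3_eq_cube)
    finally show "complex_of_real \<eta> * \<sigma> * cnj \<sigma> = of_real s3" .
  qed
qed

lemma cubic_one_real_embedding_genD:
  assumes "cubic_one_real_embedding_gen f \<theta>"
  shows "irreducible f" and "degree f = 3" and "poly (map_poly of_rat f) \<theta> = 0"
    and "poly (map_poly of_rat f) x = 0 \<longleftrightarrow> x = \<theta>"
proof -
  show "irreducible f" and "degree f = 3" and root: "poly (map_poly of_rat f) \<theta> = 0"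
    using assms by (simp_all add: cubic_one_real_embedding_gen_def)
  have "card {x :: real. poly (map_poly of_rat f) x = 0} = 1"
    using assms by (simp add: cubic_one_real_embedding_gen_def)
  then have "{x :: real. poly (map_poly of_rat f) x = 0} = {\<theta>}"
    using root by (metis (mono_tags) card_1_singletonE mem_Collect_eq singletonD)
  then show "poly (map_poly of_rat f) x = 0 \<longleftrightarrow> x = \<theta>"
    by blast
qed

lemma cubic_one_real_model:
  assumes "cubic_one_real_embedding_gen f \<theta>"
  obtains D e1 e2 e3 \<sigma> where "D > 0" and "cubic_one_real e1 e2 e3 (of_int D * \<theta>) \<sigma>"
proof -
  note irr = cubic_one_real_embedding_genD(1)[OF assms]
    and deg = cubic_one_real_embedding_genD(2)[OF assms]
    and root = cubic_one_real_embedding_genD(3)[OF assms]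
    and real_roots = cubic_one_real_embedding_genD(4)[OF assms]
  obtain D e1 e2 e3 where "D > 0" and scaling:
    "of_int e1 = - (of_int D * coeff f 2 / lead_coeff f)"
    "of_int e2 = of_int D ^ 2 * coeff f 1 / lead_coeff f"
    "of_int e3 = - (of_int D ^ 3 * coeff f 0 / lead_coeff f)"
    by (rule exists_integral_scaling)
  then have "D \<noteq> 0"
    by simp
  note root_iff = scaled_cubic_root_iff[OF deg \<open>D \<noteq> 0\<close> scaling]
  define \<eta> where "\<eta> = of_int D * \<theta>"
  interpret int_cubic e1 e2 e3 .
  have unique: "root x \<longleftrightarrow> x = \<eta>" for x :: real
  proof -
    have "root x \<longleftrightarrow> poly (map_poly of_rat f) (x / of_int D) = 0"
      using root_iff[of "x / of_int D"] \<open>D \<noteq> 0\<close> by simp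
    also have "\<dots> \<longleftrightarrow> x / of_int D = \<theta>"
      by (rule real_roots)
    also have "\<dots> \<longleftrightarrow> x = \<eta>"
      using \<open>D \<noteq> 0\<close> by (auto simp: \<eta>_def field_simps)
    finally show ?thesis .
  qed
  have eta_eq_0: "v = (0, 0, 0)" if "emb \<eta> v = 0" for v
    using emb_scaled_root_eq_0[OF irr deg root \<open>D \<noteq> 0\<close>] that by (simp add: \<eta>_def)
  have "emb \<eta> (e2, - 2 * e1, 3) \<noteq> 0"
    using eta_eq_0 by fastforce
  then have "3 * \<eta>^2 - 2 * of_int e1 * \<eta> + of_int e2 \<noteq> 0"
    by (simp add: emb_def algebra_simps)
  then obtain \<sigma> where "Im \<sigma> \<noteq> 0" and vieta:
    "complex_of_real \<eta> + \<sigma> + cnj \<sigma> = of_int e1"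
    "complex_of_real \<eta> * \<sigma> + complex_of_real \<eta> * cnj \<sigma> + \<sigma> * cnj \<sigma> = of_int e2"
    "complex_of_real \<eta> * \<sigma> * cnj \<sigma> = of_int e3"
    using real_cubic_unique_simple_root[of "of_int e1" "of_int e2" "of_int e3" \<eta>] unique
    unfolding root_def by auto
  have "root \<sigma>"
    by (rule root_if_vieta[of \<sigma> "complex_of_real \<eta>" "cnj \<sigma>"]) (use vieta in \<open>simp_all add: algebra_simps\<close>)
  then have "poly (map_poly of_rat f) (\<sigma> / of_int D) = 0"
    using root_iff[of "\<sigma> / of_int D"] \<open>D \<noteq> 0\<close> by simp
  then have sigma_eq_0: "v = (0, 0, 0)" if "emb \<sigma> v = 0" for v
    using emb_scaled_root_eq_0[OF irr deg _ \<open>D \<noteq> 0\<close>, of "\<sigma> / of_int D"] that \<open>D \<noteq> 0\<close> by simp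
  have "cubic_one_real e1 e2 e3 \<eta> \<sigma>"
    by unfold_locales (use vieta \<open>Im \<sigma> \<noteq> 0\<close> eta_eq_0 sigma_eq_0 in auto)
  then show ?thesis
    using that \<open>D > 0\<close> by (simp add: \<eta>_def)
qed

lemma Q_adjoin_scaled_rep:
  fixes f :: "rat poly"
  assumes "degree f = 3" and "poly (map_poly of_rat f) \<theta> = 0" and "D \<noteq> 0" and "\<alpha> \<in> Q_adjoin \<theta>"
  obtains M a where "M > 0" and "of_int M * \<alpha> = emb (of_int D * \<theta>) a"
proof -
  obtain r0 r1 r2 where \<alpha>: "\<alpha> = of_rat r0 + of_rat r1 * \<theta> + of_rat r2 * \<theta>^2"
    using Q_adjoin_cubic_rep[OF assms(1,2,4)] by blast
  obtain M :: int where "M > 0"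
    and int: "\<And>x. x \<in> {r0, r1 / of_int D, r2 / of_int D ^ 2} \<Longrightarrow> of_int M * x \<in> \<int>"
    by (rule rat_common_denominator[of "{r0, r1 / of_int D, r2 / of_int D ^ 2}"]) auto
  obtain a b c where a: "of_int M * r0 = of_int a" and b: "of_int M * (r1 / of_int D) = of_int b"
    and c: "of_int M * (r2 / of_int D ^ 2) = of_int c"
    using int by (metis Ints_cases insertCI)
  have "(of_int a :: real) = of_int M * of_rat r0" and "(of_int b :: real) = of_int M * of_rat r1 / of_int D"
    and "(of_int c :: real) = of_int M * of_rat r2 / of_int D ^ 2"
    using arg_cong[OF a, of "of_rat :: rat \<Rightarrow> real"] arg_cong[OF b, of "of_rat :: rat \<Rightarrow> real"]
      arg_cong[OF c, of "of_rat :: rat \<Rightarrow> real"]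
    by (simp_all add: of_rat_mult of_rat_divide of_rat_power)
  then have "of_int M * \<alpha> = emb (of_int D * \<theta>) (a, b, c)"
    using assms(3) by (simp add: \<alpha> emb_def field_simps power2_eq_square)
  with \<open>M > 0\<close> show ?thesis
    by (rule that)
qed

theorem mainTheorem4:
  fixes f :: "rat poly" and \<theta> \<alpha> \<beta> :: real
  assumes "cubic_one_real_embedding_gen f \<theta>"
    and "\<alpha> \<in> Q_adjoin \<theta>" and "\<beta> \<in> Q_adjoin \<theta>"
  shows "\<exists>\<psi> :: nat \<Rightarrow> nat. strict_mono \<psi> \<and> (\<forall>n. \<psi> n > 0) \<and>
           (\<lambda>n. real (\<psi> n) * dist_nint (real (\<psi> n) * \<alpha>) * dist_nint (real (\<psi> n) * \<beta>))
             \<longlonglongrightarrow> 0"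
proof -
  note deg = cubic_one_real_embedding_genD(2)[OF assms(1)]
    and root = cubic_one_real_embedding_genD(3)[OF assms(1)]
  obtain D e1 e2 e3 \<sigma> where "D > 0" and model: "cubic_one_real e1 e2 e3 (of_int D * \<theta>) \<sigma>"
    using cubic_one_real_model[OF assms(1)] by blast
  then have "D \<noteq> 0"
    by simp
  obtain Ma a where "Ma > 0" and "of_int Ma * \<alpha> = emb (of_int D * \<theta>) a"
    using Q_adjoin_scaled_rep[OF deg root \<open>D \<noteq> 0\<close> assms(2)] by blast
  moreover obtain Mb b where "Mb > 0" and "of_int Mb * \<beta> = emb (of_int D * \<theta>) b"
    using Q_adjoin_scaled_rep[OF deg root \<open>D \<noteq> 0\<close> assms(3)] by blast
  ultimately show ?thesis
    by (rule cubic_one_real.simultaneous_approximation[OF model])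
qed

end
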